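(* Fix a set $\mathscr{G}$ of elementary operations, each $g\in\mathscr{G}$ equipped with a general type scheme $\mathrm{scheme}(g)=(\Delta,T,U)$ as described in the context, and consider resource-aware circuit signatures (RACSs) derived by the rules in the context. Then: (1) (Gate count.) Let $\mathfrak{c}$ be the CMI with $\mathrm{id}_{\mathfrak{c}}(W)=0$ for every multiset $W$ of wire types, $\mathrm{append}^{g}_{\mathfrak{c}}(n,l,h,k)=n+1$ for all $g\in\mathscr{G}$, and $\mathrm{gate}^{g,n}_{\mathfrak{c}}$ an arbitrary constant function for each $g,n$. Whenever $\Xi\vdash_{\mathfrak{c}} Q\to\mathcal{C}\to L;I$ is derivable, we have $\operatorname{gatecount}(\mathcal{C})\le \llbracket I\rrbracket_{\mathfrak{c}}$ (for every assignment of natural numbers to the index variables). (2) (Width.) Let $\mathfrak{c}$ be the CMI with $\mathrm{id}_{\mathfrak{c}}(W)=|W|$ (the cardinality of the multiset), $\mathrm{append}^{g}_{\mathfrak{c}}(n,l,h,k)=n+\max(0,k+l-n)$ for all $g\in\mathscr{G}$, and $\mathrm{gate}^{g,n}_{\mathfrak{c}}$ an arbitrary constant function for each $g,n$. Whenever $\Xi\vdash_{\mathfrak{c}} Q\to\mathcal{C}\to L;I$ is derivable, we have $\operatorname{width}(\mathcal{C})\le \llbracket I\rrbracket_{\mathfrak{c}}$ (for every assignment of natural numbers to the index variables). (3) (Depth.) Let $\mathfrak{c}$ be the CMI with $\mathrm{gate}^{g,i}_{\mathfrak{c}}(n_1,\dots,n_k)=\max(n_1,\dots,n_k)+1$ for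 all $g\in\mathscr{G}$ and all output positions $i$, and $\mathrm{id}_{\mathfrak{c}}$, $\mathrm{append}^{g}_{\mathfrak{c}}$ arbitrary constant functions. Whenever $\Xi\vdash_{\mathfrak{c}} (\ell_1:w_1^{i_1},\dots,\ell_n:w_n^{i_n})\to\mathcal{C}\to(k_1:r_1^{I_1},\dots,k_m:r_m^{I_m});J$ is derivable, where $i_1,\dots,i_n$ are distinct index variables in $\Xi$, then for every $j\in\{1,\dots,m\}$ and every assignment $\rho$ of natural numbers to the variables of $\Xi$ we have $\operatorname{depth}(\mathcal{C})(f_\rho)(k_j)\le \llbracket I_j\rrbracket_{\mathfrak{c},\rho}$, where $f_\rho(\ell_h)=\rho(i_h)$ for $h\in\{1,\dots,n\}$.
   Context: Wire types are $\mathsf{Bit}$ and $\mathsf{Qubit}$; $\mathscr{L}$ is an infinite set of labels (wire names). Wire bundles: $\vec\ell::= * \mid \ell \mid \langle\vec\ell,\vec k\rangle$ with $\ell\in\mathscr{L}$; $\mathit{FL}(\vec\ell)$ is the set of labels occurring in $\vec\ell$ and $|\vec\ell|$ its number. Circuits (CRL): $\mathcal{C}::=\mathrm{id}_Q\mid \mathcal{C};g(\vec\ell)\to\vec k$ with $g\in\mathscr{G}$. The outputs of a circuit: $\mathrm{out}(\mathrm{id}_Q)=\mathrm{dom}(Q)$, $\mathrm{out}(\mathcal{C};g(\vec\ell)\to\vec k)=(\mathrm{out}(\mathcal{C})\setminus\mathit{FL}(\vec\ell))\cup\mathit{FL}(\vec k)$. Indices: $I,J::= n\mid i\mid I+J\mid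 I-J\mid I\cdot J\mid \max(I,J)\mid \mathrm{id}_W\mid \mathrm{append}_g(I,J,E,F)\mid g_n(I_1,\dots,I_m)$, with $n\in\mathbb{N}$, $i$ an index variable, $W$ a finite multiset of wire types, $g\in\mathscr{G}$. A circuit metric interpretation (CMI) $\mathfrak{c}$ is a triple of families of functions $\mathrm{id}_{\mathfrak{c}}(W)\in\mathbb{N}$, $\mathrm{append}^g_{\mathfrak{c}}:\mathbb{N}^4\to\mathbb{N}$, $\mathrm{gate}^{g,n}_{\mathfrak{c}}:\mathbb{N}^{k}\to\mathbb{N}$ ($k$ the number of inputs of $g$); $\llbracket I\rrbracket_{\mathfrak{c},\rho}$ is the evaluation of $I$ under assignment $\rho$ of naturals to variables, with arithmetic operators standard ($-$ truncated at $0$) and the abstract operators $\mathrm{id}_W,\mathrm{append}_g,g_n$ interpreted by $\mathfrak{c}$. $\Xi\vDash_{\mathfrak{c}} I=J$ (resp. $\le$) means equality (resp. $\le$) of evaluations for every assignment to the variables in the set $\Xi$. A label context $Q$ is a finite map from labels to annotated wire types $w^I$; $Q,L$ denotes union of contexts with disjoint domains; $\{Q\}$ denotes the multiset of (unannotated) wire types in the codomain of $Q$, and as an index $\{Q\}$ abbreviates $\mathrm{id}_{\{Q\}}$. $\Xi\vdash Q$ means all index variables in $Q$ belong to $\Xi$. Bundle types $T::=\mathbbm{1}\mid w^I\mid T\otimes U$. Each $g\in\mathscr{G}$ has a scheme $(\Delta,T,U)$ with $\Delta=\{i_1,\dots,i_n\}$ index variables, $T=w_1^{i_1}\otimes\dots\otimes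 w_n^{i_n}$, $U=r_1^{g_1(i_1,\dots,i_n)}\otimes\dots\otimes r_m^{g_m(i_1,\dots,i_n)}$. An index substitution $\delta\in\Xi\Rightarrow\Delta$ replaces each variable of $\Delta$ by an index whose variables lie in $\Xi$. Bundle judgments $\Xi;Q\vdash_{\mathfrak{c}}\vec\ell:T$: $\Xi;\emptyset\vdash *:\mathbbm{1}$; if $\Xi\vDash_{\mathfrak{c}}I=J$ then $\Xi;\ell:w^I\vdash\ell:w^J$; if $\Xi;Q_1\vdash\vec\ell:T$ and $\Xi;Q_2\vdash\vec k:U$ then $\Xi;Q_1,Q_2\vdash\langle\vec\ell,\vec k\rangle:T\otimes U$. RACS rules: (id) if $\Xi\vdash Q$ and $\vDash_{\mathfrak{c}}\{Q\}=I$ then $\Xi\vdash_{\mathfrak{c}}Q\to\mathrm{id}_Q\to Q;I$. (append) if $\Xi\vdash_{\mathfrak{c}}Q\to\mathcal{C}\to L,H;I$, $\vDash_{\mathfrak{c}}\mathrm{append}_g(I,\{L\},\{H\},\{K\})=J$, $\mathrm{scheme}(g)=(\Delta,T,U)$, $\delta\in\Xi\Rightarrow\Delta$, $\Xi;H\vdash_{\mathfrak{c}}\vec\ell:\delta(T)$ and $\Xi;K\vdash_{\mathfrak{c}}\vec k:\delta(U)$, then $\Xi\vdash_{\mathfrak{c}}Q\to(\mathcal{C};g(\vec\ell)\to\vec k)\to L,K;J$. Recursive metrics: $\operatorname{gatecount}(\mathrm{id}_Q)=0$, $\operatorname{gatecount}(\mathcal{C};g(\vec\ell)\to\vec k)=\operatorname{gatecount}(\mathcal{C})+1$.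 $\operatorname{width}(\mathrm{id}_Q)=|Q|$, $\operatorname{width}(\mathcal{C};g(\vec\ell)\to\vec k)=\operatorname{width}(\mathcal{C})+\max(0,(|\vec k|-|\vec\ell|)-\mathrm{discarded}(\mathcal{C}))$ where $\mathrm{discarded}(\mathcal{C})=\operatorname{width}(\mathcal{C})-|\mathrm{out}(\mathcal{C})|$. $\operatorname{depth}:(\mathscr{L}\to\mathbb{N})\to(\mathscr{L}\to\mathbb{N})$: $\operatorname{depth}(\mathrm{id}_Q)(in)(t)=in(t)$; $\operatorname{depth}(\mathcal{C};g(\vec\ell)\to\vec k)(in)(t)=\max\{\operatorname{depth}(\mathcal{C})(in)(\ell)\mid\ell\in\mathit{FL}(\vec\ell)\}+1$ if $t\in\mathit{FL}(\vec k)$, and $\operatorname{depth}(\mathcal{C})(in)(t)$ otherwise (with $\max\emptyset=0$). *)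

theory Defs
  imports Main "HOL-Library.Multiset"
begin

datatype wtype = Bit | Qubit

datatype 'g idx =
    INat nat
  | IVar nat
  | IPlus "'g idx" "'g idx"
  | IMinus "'g idx" "'g idx"
  | ITimes "'g idx" "'g idx"
  | IMax "'g idx" "'g idx"
  | IId "wtype multiset"
  | IAppend 'g "'g idx" "'g idx" "'g idx" "'g idx"
  | IGate 'g nat "'g idx list"

fun ivars :: "'g idx \<Rightarrow> nat set" where
  "ivars (INat n) = {}"
| "ivars (IVar i) = {i}"
| "ivars (IPlus I J) = ivars I \<union> ivars J"
| "ivars (IMinus I J) = ivars I \<union> ivars J"
| "ivars (ITimes I J) = ivars I \<union> ivars J"
| "ivars (IMax I J) = ivars I \<union> ivars J"
| "ivars (IId W) = {}"
| "ivars (IAppend g I J E F) = ivars I \<union> ivars J \<union> ivars E \<union> ivars F"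
| "ivars (IGate g n Is) = (\<Union>I\<in>set Is. ivars I)"

text \<open>Circuit metric interpretation (CMI). The gate function for g and output
  position n takes the list of its arguments (of length the number of inputs of g).\<close>
record 'g cmi =
  idc :: "wtype multiset \<Rightarrow> nat"
  appc :: "'g \<Rightarrow> nat \<Rightarrow> nat \<Rightarrow> nat \<Rightarrow> nat \<Rightarrow> nat"
  gatec :: "'g \<Rightarrow> nat \<Rightarrow> nat list \<Rightarrow> nat"

fun ieval :: "'g cmi \<Rightarrow> (nat \<Rightarrow> nat) \<Rightarrow> 'g idx \<Rightarrow> nat" where
  "ieval c \<rho> (INat n) = n"
| "ieval c \<rho> (IVar i) = \<rho> i"
| "ieval c \<rho> (IPlus I J) = ieval c \<rho> I + ieval c \<rho> J"
| "ieval c \<rho> (IMinus I J) = ieval c \<rho> I - ieval c \<rho> J"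
| "ieval c \<rho> (ITimes I J) = ieval c \<rho> I * ieval c \<rho> J"
| "ieval c \<rho> (IMax I J) = max (ieval c \<rho> I) (ieval c \<rho> J)"
| "ieval c \<rho> (IId W) = idc c W"
| "ieval c \<rho> (IAppend g I J E F) =
     appc c g (ieval c \<rho> I) (ieval c \<rho> J) (ieval c \<rho> E) (ieval c \<rho> F)"
| "ieval c \<rho> (IGate g n Is) = gatec c g n (map (ieval c \<rho>) Is)"

definition ieq :: "'g cmi \<Rightarrow> 'g idx \<Rightarrow> 'g idx \<Rightarrow> bool" where
  "ieq c I J \<longleftrightarrow> (\<forall>\<rho>. ieval c \<rho> I = ieval c \<rho> J)"

fun isubst :: "(nat \<Rightarrow> 'g idx) \<Rightarrow> 'g idx \<Rightarrow> 'g idx" where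
  "isubst \<delta> (INat n) = INat n"
| "isubst \<delta> (IVar i) = \<delta> i"
| "isubst \<delta> (IPlus I J) = IPlus (isubst \<delta> I) (isubst \<delta> J)"
| "isubst \<delta> (IMinus I J) = IMinus (isubst \<delta> I) (isubst \<delta> J)"
| "isubst \<delta> (ITimes I J) = ITimes (isubst \<delta> I) (isubst \<delta> J)"
| "isubst \<delta> (IMax I J) = IMax (isubst \<delta> I) (isubst \<delta> J)"
| "isubst \<delta> (IId W) = IId W"
| "isubst \<delta> (IAppend g I J E F) =
     IAppend g (isubst \<delta> I) (isubst \<delta> J) (isubst \<delta> E) (isubst \<delta> F)"
| "isubst \<delta> (IGate g n Is) = IGate g n (map (isubst \<delta>) Is)"

datatype 'l lbundle = BStar | BLab 'l | BPair "'l lbundle" "'l lbundle"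

fun FL :: "'l lbundle \<Rightarrow> 'l set" where
  "FL BStar = {}"
| "FL (BLab l) = {l}"
| "FL (BPair a b) = FL a \<union> FL b"

fun bsize :: "'l lbundle \<Rightarrow> nat" where
  "bsize BStar = 0"
| "bsize (BLab l) = 1"
| "bsize (BPair a b) = bsize a + bsize b"

datatype 'g btype = TOne | TWire wtype "'g idx" | TTensor "'g btype" "'g btype"

fun bsubst :: "(nat \<Rightarrow> 'g idx) \<Rightarrow> 'g btype \<Rightarrow> 'g btype" where
  "bsubst \<delta> TOne = TOne"
| "bsubst \<delta> (TWire w I) = TWire w (isubst \<delta> I)"
| "bsubst \<delta> (TTensor T U) = TTensor (bsubst \<delta> T) (bsubst \<delta> U)"

fun tensor_list :: "'g btype list \<Rightarrow> 'g btype" where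
  "tensor_list [] = TOne"
| "tensor_list [T] = T"
| "tensor_list (T # Ts) = TTensor T (tensor_list Ts)"

text \<open>The scheme of g with input wire types gin g = [w_1..w_n] and output wire
 types gout g = [r_1..r_m]: Delta = {0..<n} (variable k standing for i_(k+1)),
 T = w_1^{i_1} \<otimes> ... \<otimes> w_n^{i_n},
 U = r_1^{g_1(i_1..i_n)} \<otimes> ... \<otimes> r_m^{g_m(i_1..i_n)}
 (output positions numbered from 0).\<close>
definition scheme_T :: "('g \<Rightarrow> wtype list) \<Rightarrow> 'g \<Rightarrow> 'g btype" where
  "scheme_T gin g = tensor_list (map (\<lambda>k. TWire (gin g ! k) (IVar k)) [0..<length (gin g)])"

definition scheme_U :: "('g \<Rightarrow> wtype list) \<Rightarrow> ('g \<Rightarrow> wtype list) \<Rightarrow> 'g \<Rightarrow> 'g btype" where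
  "scheme_U gin gout g = tensor_list (map (\<lambda>j. TWire (gout g ! j)
      (IGate g j (map IVar [0..<length (gin g)]))) [0..<length (gout g)])"

type_synonym ('l,'g) lctx = "'l \<Rightarrow> (wtype \<times> 'g idx) option"

definition ctx_ms :: "('l,'g) lctx \<Rightarrow> wtype multiset" where
  "ctx_ms Q = image_mset (\<lambda>l. fst (the (Q l))) (mset_set (dom Q))"

definition ctx_vars :: "('l,'g) lctx \<Rightarrow> nat set" where
  "ctx_vars Q = (\<Union>p\<in>ran Q. ivars (snd p))"

inductive btyping :: "'g cmi \<Rightarrow> nat set \<Rightarrow> ('l,'g) lctx \<Rightarrow> 'l lbundle \<Rightarrow> 'g btype \<Rightarrow> bool"
  for c :: "'g cmi" and \<Xi> :: "nat set" where
  bt_star: "btyping c \<Xi> Map.empty BStar TOne"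
| bt_lab: "ieq c I J \<Longrightarrow> btyping c \<Xi> [l \<mapsto> (w, I)] (BLab l) (TWire w J)"
| bt_pair: "btyping c \<Xi> Q1 a T \<Longrightarrow> btyping c \<Xi> Q2 b U \<Longrightarrow> dom Q1 \<inter> dom Q2 = {} \<Longrightarrow>
      btyping c \<Xi> (Q1 ++ Q2) (BPair a b) (TTensor T U)"

datatype ('l,'g) circ = CId "('l,'g) lctx" | CApp "('l,'g) circ" 'g "'l lbundle" "'l lbundle"

inductive racs :: "('g \<Rightarrow> wtype list) \<Rightarrow> ('g \<Rightarrow> wtype list) \<Rightarrow> 'g cmi \<Rightarrow> nat set \<Rightarrow>
    ('l,'g) lctx \<Rightarrow> ('l,'g) circ \<Rightarrow> ('l,'g) lctx \<Rightarrow> 'g idx \<Rightarrow> bool"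
  for gin gout c \<Xi> where
  racs_id: "finite (dom Q) \<Longrightarrow> ctx_vars Q \<subseteq> \<Xi> \<Longrightarrow> ieq c (IId (ctx_ms Q)) I \<Longrightarrow>
      racs gin gout c \<Xi> Q (CId Q) Q I"
| racs_append: "racs gin gout c \<Xi> Q C (L ++ H) I \<Longrightarrow> dom L \<inter> dom H = {} \<Longrightarrow>
      ieq c (IAppend g I (IId (ctx_ms L)) (IId (ctx_ms H)) (IId (ctx_ms K))) J \<Longrightarrow>
      (\<forall>k < length (gin g). ivars (\<delta> k) \<subseteq> \<Xi>) \<Longrightarrow>
      btyping c \<Xi> H lb (bsubst \<delta> (scheme_T gin g)) \<Longrightarrow>
      btyping c \<Xi> K kb (bsubst \<delta> (scheme_U gin gout g)) \<Longrightarrow>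
      dom L \<inter> dom K = {} \<Longrightarrow>
      racs gin gout c \<Xi> Q (CApp C g lb kb) (L ++ K) J"

fun gatecount :: "('l,'g) circ \<Rightarrow> nat" where
  "gatecount (CId Q) = 0"
| "gatecount (CApp C g l k) = gatecount C + 1"

fun cout :: "('l,'g) circ \<Rightarrow> 'l set" where
  "cout (CId Q) = dom Q"
| "cout (CApp C g l k) = (cout C - FL l) \<union> FL k"

text \<open>Width, with the arithmetic inside max(0, _) carried out in the integers.\<close>
fun width :: "('l,'g) circ \<Rightarrow> nat" where
  "width (CId Q) = card (dom Q)"
| "width (CApp C g l k) = width C +
     nat (max 0 ((int (bsize k) - int (bsize l)) - (int (width C) - int (card (cout C)))))"

fun depth :: "('l,'g) circ \<Rightarrow> ('l \<Rightarrow> nat) \<Rightarrow> 'l \<Rightarrow> nat" where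
  "depth (CId Q) inp t = inp t"
| "depth (CApp C g l k) inp t =
     (if t \<in> FL k then Max (insert 0 ((\<lambda>x. depth C inp x) ` FL l)) + 1
      else depth C inp t)"

end

theory Submission
  imports Defs
begin

text \<open>Each bound holds, by induction on the RACS derivation, for every CMI whose interpretation
  of \<open>id\<close>, \<open>append\<close> or the gates dominates the corresponding clause of the metric. Since the
  outputs of \<open>C\<close> are exactly the labels of \<open>L, H\<close>, the width clause for appending a gate
  collapses to \<open>max (width C) (|L| + |K|)\<close>. For depth the invariant is that the annotation of
  every wire bounds its depth: an input wire of a gate is annotated by some \<open>\<delta> m\<close> and an output
  wire by \<open>g\<^sub>j (\<delta> 0, \<dots>, \<delta> (n - 1))\<close>, interpreted as one plus the maximum of the arguments.\<close>

lemma finite_FL [simp]: "finite (FL b)"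
  by (induction b) auto

lemma btyping_dom:
  assumes "btyping c \<Xi> H b T"
  shows "dom H = FL b" and "bsize b = card (dom H)"
  using assms
  by (induction rule: btyping.induct) (auto simp: card_Un_disjoint Un_commute)

fun wires :: "'g btype \<Rightarrow> (wtype \<times> 'g idx) set" where
  "wires TOne = {}"
| "wires (TWire w I) = {(w, I)}"
| "wires (TTensor T U) = wires T \<union> wires U"

lemma wires_tensor_list: "wires (tensor_list Ts) = (\<Union>T\<in>set Ts. wires T)"
  by (induction Ts rule: tensor_list.induct) auto

lemma wires_bsubst: "wires (bsubst \<delta> T) = (\<lambda>(w, I). (w, isubst \<delta> I)) ` wires T"
  by (induction T) auto

lemma wires_scheme_T:
  "wires (bsubst \<delta> (scheme_T gin g)) = (\<lambda>m. (gin g ! m, \<delta> m)) ` {..<length (gin g)}"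
  by (auto simp: scheme_T_def wires_bsubst wires_tensor_list image_UN)

lemma wires_scheme_U:
  "wires (bsubst \<delta> (scheme_U gin gout g)) =
     (\<lambda>j. (gout g ! j, IGate g j (map \<delta> [0..<length (gin g)]))) ` {..<length (gout g)}"
  by (auto simp: scheme_U_def wires_bsubst wires_tensor_list image_UN)

lemma btyping_lookup:
  assumes "btyping c \<Xi> H b T" and "H l = Some (w, I)"
  shows "\<exists>J. (w, J) \<in> wires T \<and> ieq c I J"
  using assms
proof (induction arbitrary: l rule: btyping.induct)
  case (bt_pair Q1 a T Q2 b U)
  then show ?case by (fastforce simp: map_add_Some_iff)
qed (auto split: if_splits)

lemma racs_cout:
  assumes "racs gin gout c \<Xi> Q C L I"
  shows "cout C = dom L" and "finite (dom L)"
  using assms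
  by (induction rule: racs.induct) (auto simp: btyping_dom)

lemma ieval_ieq: "ieq c I J \<Longrightarrow> ieval c \<rho> J = ieval c \<rho> I"
  by (simp add: ieq_def)

lemma size_ctx_ms: "size (ctx_ms Q) = card (dom Q)"
  by (simp add: ctx_ms_def)

lemma racs_gatecount_le:
  assumes "racs gin gout c \<Xi> Q C L I"
    and "\<forall>g n l h k. n + 1 \<le> appc c g n l h k"
  shows "gatecount C \<le> ieval c \<rho> I"
  using assms
proof (induction rule: racs.induct)
  case (racs_append Q C L H I g K J \<delta> lb kb)
  from racs_append.prems have "ieval c \<rho> I + 1 \<le> ieval c \<rho> J"
    by (simp add: ieval_ieq[OF racs_append.hyps(3)])
  with racs_append.IH racs_append.prems show ?case by simp
qed simp

lemma width_CApp:
  assumes "bsize lb \<le> card (cout C)"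
  shows "width (CApp C g lb kb) = max (width C) (bsize kb + (card (cout C) - bsize lb))"
  using assms by simp

lemma racs_width_le:
  assumes "racs gin gout c \<Xi> Q C L I"
    and "\<forall>W. size W \<le> idc c W"
    and "\<forall>g n l h k. max n (k + l) \<le> appc c g n l h k"
  shows "width C \<le> ieval c \<rho> I"
  using assms
proof (induction rule: racs.induct)
  case (racs_id Q I)
  have "size (ctx_ms Q) \<le> idc c (ctx_ms Q)"
    using racs_id.prems(1) by blast
  then show ?case by (simp add: ieval_ieq[OF racs_id.hyps(3)] size_ctx_ms)
next
  case (racs_append Q C L H I g K J \<delta> lb kb)
  have "cout C = dom L \<union> dom H" and "finite (dom L)" and "finite (dom H)"
    using racs_cout[OF racs_append.hyps(1)] by auto
  with racs_append.hyps(2) have card_cout: "card (cout C) = card (dom L) + bsize lb"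
    by (simp add: card_Un_disjoint btyping_dom[OF racs_append.hyps(5)])
  have size_le_idc: "card (dom M) \<le> idc c (ctx_ms M)" for M :: "('l, 'g) lctx"
    using racs_append.prems(1) by (metis size_ctx_ms)
  have "width (CApp C g lb kb) = max (width C) (card (dom K) + card (dom L))"
    using card_cout by (simp add: width_CApp btyping_dom[OF racs_append.hyps(6)])
  also have "\<dots> \<le> max (ieval c \<rho> I) (card (dom K) + card (dom L))"
    using racs_append.IH racs_append.prems by simp
  also have "\<dots> \<le> max (ieval c \<rho> I) (idc c (ctx_ms K) + idc c (ctx_ms L))"
    by (intro max.mono order_refl add_mono size_le_idc)
  also have "\<dots> \<le> ieval c \<rho> J"
    using racs_append.prems(2) by (simp add: ieval_ieq[OF racs_append.hyps(3)])
  finally show ?case .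
qed

definition ctx_bounds :: "'g cmi \<Rightarrow> (nat \<Rightarrow> nat) \<Rightarrow> ('l \<Rightarrow> nat) \<Rightarrow> ('l, 'g) lctx \<Rightarrow> bool" where
  "ctx_bounds c \<rho> d Q \<longleftrightarrow> (\<forall>l w I. Q l = Some (w, I) \<longrightarrow> d l \<le> ieval c \<rho> I)"

lemma depth_gate_outputs_le:
  assumes gate: "\<forall>g i xs. length xs = length (gin g) \<longrightarrow> Max (insert 0 (set xs)) + 1 \<le> gatec c g i xs"
    and inputs: "btyping c \<Xi> H lb (bsubst \<delta> (scheme_T gin g))" "ctx_bounds c \<rho> (depth C inp) H"
    and outputs: "btyping c \<Xi> K kb (bsubst \<delta> (scheme_U gin gout g))" "K k = Some (r, Ik)"
  shows "depth (CApp C g lb kb) inp k \<le> ieval c \<rho> Ik"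
proof -
  define xs where "xs = map (\<lambda>m. ieval c \<rho> (\<delta> m)) [0..<length (gin g)]"
  have input_bound: "depth C inp l \<le> Max (insert 0 (set xs))" if "l \<in> FL lb" for l
  proof -
    from that obtain w I where "H l = Some (w, I)"
      using btyping_dom(1)[OF inputs(1)] by (metis domD surj_pair)
    moreover from btyping_lookup[OF inputs(1) this] obtain m
      where "m < length (gin g)" "ieq c I (\<delta> m)"
      by (auto simp: wires_scheme_T)
    ultimately have "depth C inp l \<le> ieval c \<rho> (\<delta> m)"
      using inputs(2) by (auto simp: ctx_bounds_def ieval_ieq)
    moreover have "ieval c \<rho> (\<delta> m) \<in> set xs"
      using \<open>m < length (gin g)\<close> by (simp add: xs_def)
    ultimately show ?thesis by (meson Max_ge List.finite_set finite_insert insertI2 le_trans)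
  qed
  have "length xs = length (gin g)"
    by (simp add: xs_def)
  obtain j where "ieq c Ik (IGate g j (map \<delta> [0..<length (gin g)]))"
    using btyping_lookup[OF outputs] by (auto simp: wires_scheme_U)
  then have output_value: "ieval c \<rho> Ik = gatec c g j xs"
    using ieval_ieq by (fastforce simp: xs_def comp_def)
  have "depth (CApp C g lb kb) inp k = Max (insert 0 (depth C inp ` FL lb)) + 1"
    using outputs btyping_dom(1)[OF outputs(1)] by auto
  also have "\<dots> \<le> Max (insert 0 (set xs)) + 1"
    using input_bound by (simp add: Max_le_iff)
  also have "\<dots> \<le> ieval c \<rho> Ik"
    using gate output_value by (simp add: \<open>length xs = length (gin g)\<close>)
  finally show ?thesis .
qed

lemma racs_depth_bounds:
  assumes "racs gin gout c \<Xi> Q C L J"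
    and "\<forall>g i xs. length xs = length (gin g) \<longrightarrow> Max (insert 0 (set xs)) + 1 \<le> gatec c g i xs"
    and "ctx_bounds c \<rho> inp Q"
  shows "ctx_bounds c \<rho> (depth C inp) L"
  using assms
proof (induction rule: racs.induct)
  case (racs_append Q C L H I g K J \<delta> lb kb)
  have IH: "ctx_bounds c \<rho> (depth C inp) (L ++ H)"
    using racs_append.IH racs_append.prems by blast
  show ?case
    unfolding ctx_bounds_def
  proof (intro allI impI)
    fix k r Ik
    assume "(L ++ K) k = Some (r, Ik)"
    then consider "K k = Some (r, Ik)" | "K k = None" "L k = Some (r, Ik)"
      by (auto split: option.splits)
    then show "depth (CApp C g lb kb) inp k \<le> ieval c \<rho> Ik"
    proof cases
      case 1
      from IH have "ctx_bounds c \<rho> (depth C inp) H"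
        by (auto simp: ctx_bounds_def)
      with 1 racs_append show ?thesis by (blast intro: depth_gate_outputs_le)
    next
      case 2
      with racs_append.hyps(2) have "(L ++ H) k = Some (r, Ik)"
        by (auto simp: map_add_def split: option.splits)
      with IH 2 show ?thesis
        by (auto simp: ctx_bounds_def btyping_dom(1)[OF racs_append.hyps(6), symmetric])
    qed
  qed
qed (simp add: ctx_bounds_def)

theorem mainTheorem1:
  fixes gin gout :: "'g \<Rightarrow> wtype list"
  assumes "infinite (UNIV :: 'l set)"
  shows
  "(\<forall>(c :: 'g cmi) \<Xi> (Q :: ('l,'g) lctx) C L I.
      (\<forall>W. idc c W = 0) \<and> (\<forall>g n l h k. appc c g n l h k = n + 1) \<and>
      (\<forall>g n. \<exists>a. \<forall>xs. length xs = length (gin g) \<longrightarrow> gatec c g n xs = a) \<and>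
      racs gin gout c \<Xi> Q C L I
      \<longrightarrow> (\<forall>\<rho>. gatecount C \<le> ieval c \<rho> I))
 \<and> (\<forall>(c :: 'g cmi) \<Xi> (Q :: ('l,'g) lctx) C L I.
      (\<forall>W. idc c W = size W) \<and> (\<forall>g n l h k. appc c g n l h k = n + max 0 (k + l - n)) \<and>
      (\<forall>g n. \<exists>a. \<forall>xs. length xs = length (gin g) \<longrightarrow> gatec c g n xs = a) \<and>
      racs gin gout c \<Xi> Q C L I
      \<longrightarrow> (\<forall>\<rho>. width C \<le> ieval c \<rho> I))
 \<and> (\<forall>(c :: 'g cmi) \<Xi> (Q :: ('l,'g) lctx) C L J (iv :: 'l \<Rightarrow> nat).
      (\<forall>g i xs. length xs = length (gin g) \<longrightarrow> gatec c g i xs = Max (insert 0 (set xs)) + 1) \<and>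
      (\<exists>a. \<forall>W. idc c W = a) \<and>
      (\<forall>g. \<exists>a. \<forall>n l h k. appc c g n l h k = a) \<and>
      (\<forall>x\<in>dom Q. \<exists>w. Q x = Some (w, IVar (iv x)) \<and> iv x \<in> \<Xi>) \<and>
      inj_on iv (dom Q) \<and>
      racs gin gout c \<Xi> Q C L J
      \<longrightarrow> (\<forall>k r Ik \<rho> f. L k = Some (r, Ik) \<and> (\<forall>x\<in>dom Q. f x = \<rho> (iv x))
             \<longrightarrow> depth C f k \<le> ieval c \<rho> Ik))"
proof (intro conjI allI impI; elim conjE)
  fix c :: "'g cmi" and \<Xi> Q C L I \<rho>
  assume "\<forall>g n l h k. appc c g n l h k = n + 1" "racs gin gout c \<Xi> Q C L I"
  then show "gatecount C \<le> ieval c \<rho> I" by (simp add: racs_gatecount_le)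
next
  fix c :: "'g cmi" and \<Xi> Q C L I \<rho>
  assume "\<forall>W. idc c W = size W" "\<forall>g n l h k. appc c g n l h k = n + max 0 (k + l - n)"
    and "racs gin gout c \<Xi> Q C L I"
  moreover have "\<forall>n k l :: nat. max n (k + l) \<le> n + max 0 (k + l - n)"
    by (auto simp: max_def)
  ultimately show "width C \<le> ieval c \<rho> I"
    using racs_width_le[of gin gout c \<Xi> Q C L I] by simp
next
  fix c :: "'g cmi" and \<Xi> and Q :: "('l,'g) lctx" and C L J and iv :: "'l \<Rightarrow> nat"
    and k r Ik \<rho> and f :: "'l \<Rightarrow> nat"
  assume gate: "\<forall>g i xs. length xs = length (gin g) \<longrightarrow> gatec c g i xs = Max (insert 0 (set xs)) + 1"
    and inputs: "\<forall>x\<in>dom Q. \<exists>w. Q x = Some (w, IVar (iv x)) \<and> iv x \<in> \<Xi>"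
    and derivation: "racs gin gout c \<Xi> Q C L J"
    and out: "L k = Some (r, Ik)"
    and input_depth: "\<forall>x\<in>dom Q. f x = \<rho> (iv x)"
  from inputs input_depth have "ctx_bounds c \<rho> f Q"
    by (force simp: ctx_bounds_def)
  with derivation gate have "ctx_bounds c \<rho> (depth C f) L"
    by (simp add: racs_depth_bounds)
  with out show "depth C f k \<le> ieval c \<rho> Ik"
    by (simp add: ctx_bounds_def)
qed

end
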